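(* Fix $d\in\mathbb N$ and $k\le d$, and let $S_\star\subseteq[d]$ with $|S_\star|=k$ be unknown. Suppose samples $\{(x^{(i)},\tilde z^{(i)})\}_{i=1}^m$ are generated under propagating noise with level $\eta\in[0,1/2)$, where the orderings $\pi^{(1)},\dots,\pi^{(m)}$ may be chosen adversarially based on $(x^{(1)},\dots,x^{(m)})$. Then there is a universal constant $C>0$ such that for every $\delta\in(0,1)$, if $m\ge C\cdot\frac{k}{(1-2\eta)^2}\log\frac d\delta$, the output $\hat S$ of the Support Recovery Algorithm satisfies $\Pr[\hat S=S_\star]\ge1-\delta$.
   Context: Data model: $x^{(1)},\dots,x^{(m)}$ are i.i.d. uniform on $\{0,1\}^d$. For each $i$, a bijection $\pi^{(i)}:[k]\to S_\star$ (an ordering of $S_\star$) is chosen (possibly adversarially as a function of all the inputs). With $\xi^{(i)}_1,\dots,\xi^{(i)}_k$ i.i.d. $\mathrm{Bern}(\eta)$, independent of everything else, the observed chain is $\tilde z^{(i)}=(\tilde z^{(i)}_1,\dots,\tilde z^{(i)}_k)$ with $\tilde z^{(i)}_0=0$ and $\tilde z^{(i)}_t=\tilde z^{(i)}_{t-1}\oplus x^{(i)}_{\pi^{(i)}(t)}\oplus\xi^{(i)}_t$ for $t=1,\dots,k$ (equivalently $\tilde z^{(i)}_t=\bigoplus_{s\le t}x^{(i)}_{\pi^{(i)}(s)}\oplus\bigoplus_{s\le t}\xi^{(i)}_s$). Support Recovery Algorithm: with $\tilde z^{(i)}_0=0$, set $\tilde\delta^{(i)}_t=1-2(\tilde z^{(i)}_t\oplus\tilde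 z^{(i)}_{t-1})$ and $\tilde s^{(i)}=\sum_{t=1}^k\tilde\delta^{(i)}_t$; for each $j\in[d]$ compute $\mathrm{score}(j)=\frac1m\sum_{i=1}^m(1-2x^{(i)}_j)\tilde s^{(i)}$; output $\hat S$ as the $k$ indices with largest score. *)

theory Defs
  imports "HOL-Probability.Probability"
begin

text \<open>Conventions: coordinates are indexed by [d] = {1..d}, samples by {1..m},
  chain positions by [k] = {1..k}. Bits are booleans (True = 1), XOR is inequality.
  A sample matrix is X :: nat \<Rightarrow> nat \<Rightarrow> bool, X i j = x^(i)_j;
  the noise matrix is N :: nat \<Rightarrow> nat \<Rightarrow> bool, N i t = xi^(i)_t.\<close>

definition input_pmf :: "nat \<Rightarrow> nat \<Rightarrow> (nat \<Rightarrow> nat \<Rightarrow> bool) pmf" where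
  "input_pmf m d =
     map_pmf (\<lambda>f i j. f (i, j)) (Pi_pmf ({1..m} \<times> {1..d}) False (\<lambda>_. pmf_of_set UNIV))"

definition noise_pmf :: "nat \<Rightarrow> nat \<Rightarrow> real \<Rightarrow> (nat \<Rightarrow> nat \<Rightarrow> bool) pmf" where
  "noise_pmf m k \<eta> =
     map_pmf (\<lambda>f i t. f (i, t)) (Pi_pmf ({1..m} \<times> {1..k}) False (\<lambda>_. bernoulli_pmf \<eta>))"

fun chain :: "(nat \<Rightarrow> bool) \<Rightarrow> (nat \<Rightarrow> nat) \<Rightarrow> (nat \<Rightarrow> bool) \<Rightarrow> nat \<Rightarrow> bool" where
  "chain x p \<xi> 0 = False"
| "chain x p \<xi> (Suc t) = ((chain x p \<xi> t \<noteq> x (p (Suc t))) \<noteq> \<xi> (Suc t))"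

definition chain_sum :: "nat \<Rightarrow> (nat \<Rightarrow> bool) \<Rightarrow> real" where
  "chain_sum k z = (\<Sum>t=1..k. 1 - 2 * of_bool (z t \<noteq> z (t - 1)))"

definition score :: "nat \<Rightarrow> nat \<Rightarrow> (nat \<Rightarrow> nat \<Rightarrow> bool) \<Rightarrow> (nat \<Rightarrow> nat \<Rightarrow> bool) \<Rightarrow> nat \<Rightarrow> real" where
  "score m k X Z j = (1 / real m) * (\<Sum>i=1..m. (1 - 2 * of_bool (X i j)) * chain_sum k (Z i))"

text \<open>The possible outputs "k indices with largest score" (all tie-breakings).\<close>
definition top_k_sets :: "nat \<Rightarrow> nat \<Rightarrow> (nat \<Rightarrow> real) \<Rightarrow> nat set set" where
  "top_k_sets d k sc = {T. T \<subseteq> {1..d} \<and> card T = k \<and>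
       (\<forall>j\<in>T. \<forall>l\<in>{1..d} - T. sc l \<le> sc j)}"

text \<open>Success event: every admissible output of the algorithm equals S
  (i.e. recovery succeeds no matter how ties are broken). Here P is the adversary:
  P X i is the ordering used for sample i, chosen as a function of all inputs X.\<close>
definition recovery_success ::
  "nat \<Rightarrow> nat \<Rightarrow> nat \<Rightarrow> nat set \<Rightarrow> ((nat \<Rightarrow> nat \<Rightarrow> bool) \<Rightarrow> nat \<Rightarrow> nat \<Rightarrow> nat)
     \<Rightarrow> (nat \<Rightarrow> nat \<Rightarrow> bool) \<Rightarrow> (nat \<Rightarrow> nat \<Rightarrow> bool) \<Rightarrow> bool" where
  "recovery_success d k m S P X N =
     (\<forall>T \<in> top_k_sets d k (score m k X (\<lambda>i. chain (X i) (P X i) (N i))). T = S)"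

end

theory Submission
  imports Defs
begin

text \<open>Encode bits as signs, spin b = (-1)^b, and put gamma = 1 - 2 eta. The increments of a
  chain are spin (x_(pi(t))) * spin (xi_t), so m * score(j) is a sum over samples i and
  positions t of spin (x_j) spin (x_(pi_i(t))) spin (xi_it). Given the inputs the noise signs
  are independent with mean gamma, whatever orderings the adversary chose, so by Hoeffding
  m * score(j) is within m gamma/4 of gamma times the column correlation
  sum_i sum_(l in S) spin (x_j) spin (x_l) = m [j in S] + H_j, with H_j the same sum over
  S - {j}. Replacing x_l by x_l xor x_j for l in S - {j} preserves the uniform input
  distribution and turns H_j into a sum of at most m k independent uniform signs, so
  |H_j| < m/4 with high probability as well. Off these 2d bad events every score on S
  exceeds m gamma/2 > every score off S, and the union bound gives failure probability
  4 d exp (- m gamma^2 / (32 k)), which is at most delta once m >= 96 k ln (d/delta) / gamma^2.\<close>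

lemma Pi_pmf_Hoeffding_abs:
  fixes D :: "'i \<Rightarrow> 'v pmf" and g :: "'i \<Rightarrow> 'v \<Rightarrow> real"
  assumes fin: "finite I" and JI: "J \<subseteq> I"
    and bnd: "\<And>a v. a \<in> J \<Longrightarrow> \<bar>g a v\<bar> \<le> 1"
    and eps: "\<epsilon> > 0" and K: "real (card J) \<le> K" "K > 0"
  shows "measure_pmf.prob (Pi_pmf I dflt D)
     {f. \<bar>(\<Sum>a\<in>J. g a (f a)) - (\<Sum>a\<in>J. measure_pmf.expectation (D a) (g a))\<bar> \<ge> \<epsilon>}
      \<le> 2 * exp (- \<epsilon>\<^sup>2 / (2 * K))"
proof (cases "J = {}")
  case True
  then show ?thesis using eps by simp
next
  case False
  have finJ: "finite J" using fin JI finite_subset by blast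
  let ?M = "measure_pmf (Pi_pmf I dflt D)"
  let ?\<mu> = "\<Sum>a\<in>J. measure_pmf.expectation (Pi_pmf I dflt D) (\<lambda>f. g a (f a))"
  interpret H: Hoeffding_ineq ?M J "\<lambda>a f. g a (f a)" "\<lambda>_. -1" "\<lambda>_. 1" ?\<mu>
  proof unfold_locales
    show "prob_space.indep_vars ?M (\<lambda>_. borel) (\<lambda>a f. g a (f a)) J"
      by (rule prob_space.indep_vars_compose2[OF measure_pmf.prob_space_axioms
            prob_space.indep_vars_subset[OF measure_pmf.prob_space_axioms indep_vars_Pi_pmf[OF fin] JI]])
         auto
    show "AE x in ?M. g i (x i) \<in> {- 1..1}" if "i \<in> J" for i
      using bnd[OF that] by (auto simp: abs_le_iff)
  qed (simp_all add: finJ)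
  have \<mu>: "?\<mu> = (\<Sum>a\<in>J. measure_pmf.expectation (D a) (g a))"
  proof (rule sum.cong[OF refl])
    fix a assume "a \<in> J"
    then have "map_pmf (\<lambda>f. f a) (Pi_pmf I dflt D) = D a"
      using Pi_pmf_component[OF fin, of a dflt D] JI by auto
    then show "measure_pmf.expectation (Pi_pmf I dflt D) (\<lambda>f. g a (f a))
        = measure_pmf.expectation (D a) (g a)"
      by (metis integral_map_pmf)
  qed
  have card_pos: "card J > 0" using False finJ by (simp add: card_gt_0_iff)
  have "measure_pmf.prob (Pi_pmf I dflt D) {x \<in> space ?M. \<bar>(\<Sum>a\<in>J. g a (x a)) - ?\<mu>\<bar> \<ge> \<epsilon>}
      \<le> 2 * exp (-2 * \<epsilon>\<^sup>2 / (\<Sum>i\<in>J. ((1::real) - - 1)\<^sup>2))"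
    using eps card_pos by (intro H.Hoeffding_ineq_abs_ge) auto
  also have "-2 * \<epsilon>\<^sup>2 / (\<Sum>i\<in>J. ((1::real) - - 1)\<^sup>2) = - \<epsilon>\<^sup>2 / (2 * real (card J))"
    by simp
  also have "\<dots> \<le> - \<epsilon>\<^sup>2 / (2 * K)"
    using K card_pos eps by (intro divide_left_mono_neg frac_le) auto
  finally show ?thesis by (simp add: \<mu>)
qed

lemma measure_pair_pmf_le_sections:
  assumes "\<And>a. measure_pmf.prob B {b. (a, b) \<in> E} \<le> c"
  shows "measure_pmf.prob (pair_pmf A B) E \<le> c"
proof -
  have c: "c \<ge> 0" using assms[of undefined] measure_nonneg order_trans by blast
  have "emeasure (pair_pmf A B) E = (\<integral>\<^sup>+a. \<integral>\<^sup>+b. indicator E (a, b) \<partial>B \<partial>A)"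
    by (simp add: nn_integral_pair_pmf' flip: nn_integral_indicator)
  also have "\<dots> = (\<integral>\<^sup>+a. emeasure B {b. (a, b) \<in> E} \<partial>A)"
    by (intro nn_integral_cong) (simp add: indicator_def flip: nn_integral_indicator)
  also have "\<dots> \<le> (\<integral>\<^sup>+a. ennreal c \<partial>A)"
    by (intro nn_integral_mono) (simp add: measure_pmf.emeasure_eq_measure assms ennreal_leI)
  finally show ?thesis
    by (simp add: measure_pmf.emeasure_eq_measure c)
qed

lemma measure_pair_pmf_fst:
  "measure_pmf.prob (pair_pmf A B) {(a, b). Q a} = measure_pmf.prob A {a. Q a}"
proof -
  have "measure_pmf.prob A {a. Q a} = measure_pmf.prob (map_pmf fst (pair_pmf A B)) {a. Q a}"
    by (simp add: map_fst_pair_pmf)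
  then show ?thesis
    by (simp add: vimage_def case_prod_unfold)
qed

lemma map_pmf_of_set_involution:
  assumes "finite A" "A \<noteq> {}" "\<And>x. x \<in> A \<Longrightarrow> f x \<in> A" "\<And>x. f (f x) = x"
  shows "map_pmf f (pmf_of_set A) = pmf_of_set A"
  using assms by (intro map_pmf_of_set_bij_betw bij_betw_byWitness[where f' = f]) auto

definition spin :: "bool \<Rightarrow> real" where
  "spin b = 1 - 2 * of_bool b"

lemma spin_xor: "spin (a \<noteq> b) = spin a * spin b"
  by (cases a; cases b) (simp_all add: spin_def)

lemma abs_spin [simp]: "\<bar>spin a\<bar> = 1"
  by (cases a) (simp_all add: spin_def)

lemma expectation_spin_uniform: "measure_pmf.expectation (pmf_of_set UNIV) spin = 0"
  by (simp add: integral_pmf_of_set UNIV_bool spin_def)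

lemma expectation_scaled_spin_bernoulli:
  assumes "0 \<le> p" "p \<le> 1"
  shows "measure_pmf.expectation (bernoulli_pmf p) (\<lambda>b. c * spin b) = (1 - 2 * p) * c"
  using assms by (simp add: spin_def algebra_simps)

lemma chain_sum_chain:
  "chain_sum k (chain x p \<xi>) = (\<Sum>t=1..k. spin (x (p t)) * spin (\<xi> t))"
  unfolding chain_sum_def
proof (rule sum.cong[OF refl])
  fix t assume "t \<in> {1..k}"
  then obtain s where t: "t = Suc s" by (cases t) auto
  show "1 - 2 * of_bool (chain x p \<xi> t \<noteq> chain x p \<xi> (t - 1)) = spin (x (p t)) * spin (\<xi> t)"
    unfolding t by (cases "chain x p \<xi> s"; cases "x (p (Suc s))"; cases "\<xi> (Suc s)")
      (simp_all add: spin_def)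
qed

lemma score_chain:
  "real m * score m k X (\<lambda>i. chain (X i) (p i) (N i)) j =
     (\<Sum>(i, t)\<in>{1..m} \<times> {1..k}. spin (X i j) * spin (X i (p i t)) * spin (N i t))"
  by (cases "m = 0")
    (simp_all add: score_def chain_sum_chain sum_distrib_left sum.cartesian_product mult.assoc
      flip: spin_def)

definition column_corr :: "nat \<Rightarrow> nat set \<Rightarrow> nat \<Rightarrow> (nat \<Rightarrow> nat \<Rightarrow> bool) \<Rightarrow> real" where
  "column_corr m R j X = (\<Sum>i=1..m. \<Sum>l\<in>R. spin (X i j) * spin (X i l))"

lemma column_corr_reindex:
  fixes p :: "nat \<Rightarrow> nat \<Rightarrow> nat"
  assumes "\<And>i. i \<in> {1..m} \<Longrightarrow> bij_betw (p i) {1..k} S"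
  shows "(\<Sum>(i, t)\<in>{1..m} \<times> {1..k}. spin (X i j) * spin (X i (p i t))) = column_corr m S j X"
  unfolding column_corr_def sum.cartesian_product[symmetric]
  by (intro sum.cong refl sum.reindex_bij_betw assms)

lemma column_corr_remove:
  assumes "finite R"
  shows "column_corr m R j X = real m * of_bool (j \<in> R) + column_corr m (R - {j}) j X"
proof -
  have "(\<Sum>l\<in>R. spin (X i j) * spin (X i l)) = of_bool (j \<in> R) + (\<Sum>l\<in>R - {j}. spin (X i j) * spin (X i l))"
    for i
    using sum.remove[OF assms, of j "\<lambda>l. spin (X i j) * spin (X i l)"]
    by (cases "j \<in> R") (simp_all add: spin_def)
  then show ?thesis
    unfolding column_corr_def by (simp add: sum.distrib)
qed

lemma prob_score_deviation:
  assumes "0 \<le> \<eta>" "\<eta> < 1/2" "m > 0" "k > 0"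
    and bij: "\<And>i. i \<in> {1..m} \<Longrightarrow> bij_betw (p i) {1..k} S"
  shows "measure_pmf.prob (noise_pmf m k \<eta>)
     {N. \<bar>real m * score m k X (\<lambda>i. chain (X i) (p i) (N i)) j - (1 - 2 * \<eta>) * column_corr m S j X\<bar>
           \<ge> real m * (1 - 2 * \<eta>) / 4}
     \<le> 2 * exp (- real m * (1 - 2 * \<eta>)\<^sup>2 / (32 * real k))"
proof -
  let ?J = "{1..m} \<times> {1..k}"
  define c where "c = (\<lambda>(i, t). spin (X i j) * spin (X i (p i t)))"
  define g where "g a b = c a * spin b" for a b
  have score: "real m * score m k X (\<lambda>i. chain (X i) (p i) (N i)) j = (\<Sum>a\<in>?J. g a (N (fst a) (snd a)))"
    for N
    unfolding score_chain g_def c_def by (simp add: case_prod_unfold)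
  have expect: "measure_pmf.expectation (bernoulli_pmf \<eta>) (g a) = (1 - 2 * \<eta>) * c a" for a
    unfolding g_def using assms(1,2) by (intro expectation_scaled_spin_bernoulli) auto
  have "column_corr m S j X = (\<Sum>a\<in>?J. c a)"
    unfolding c_def by (rule column_corr_reindex[OF bij, symmetric])
  then have mean: "(1 - 2 * \<eta>) * column_corr m S j X
      = (\<Sum>a\<in>?J. measure_pmf.expectation (bernoulli_pmf \<eta>) (g a))"
    by (simp add: expect sum_distrib_left)
  have "measure_pmf.prob (noise_pmf m k \<eta>)
     {N. \<bar>real m * score m k X (\<lambda>i. chain (X i) (p i) (N i)) j - (1 - 2 * \<eta>) * column_corr m S j X\<bar>
           \<ge> real m * (1 - 2 * \<eta>) / 4}
   = measure_pmf.prob (Pi_pmf ?J False (\<lambda>_. bernoulli_pmf \<eta>))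
     {f. \<bar>(\<Sum>a\<in>?J. g a (f a)) - (\<Sum>a\<in>?J. measure_pmf.expectation (bernoulli_pmf \<eta>) (g a))\<bar>
           \<ge> real m * (1 - 2 * \<eta>) / 4}"
    unfolding noise_pmf_def measure_map_pmf vimage_def score mean by simp
  also have "\<dots> \<le> 2 * exp (- (real m * (1 - 2 * \<eta>) / 4)\<^sup>2 / (2 * (real m * real k)))"
    by (rule Pi_pmf_Hoeffding_abs) (use assms in \<open>auto simp: g_def c_def abs_mult case_prod_unfold\<close>)
  also have "\<dots> = 2 * exp (- real m * (1 - 2 * \<eta>)\<^sup>2 / (32 * real k))"
    using assms(3,4) by (simp add: field_simps power2_eq_square)
  finally show ?thesis .
qed

definition xor_columns :: "nat set \<Rightarrow> nat \<Rightarrow> (nat \<Rightarrow> nat \<Rightarrow> bool) \<Rightarrow> nat \<Rightarrow> nat \<Rightarrow> bool" where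
  "xor_columns R j X = (\<lambda>i l. if l \<in> R then X i l \<noteq> X i j else X i l)"

lemma map_pmf_xor_columns_input_pmf:
  assumes "R \<subseteq> {1..d}" "j \<notin> R"
  shows "map_pmf (xor_columns R j) (input_pmf m d) = input_pmf m d"
proof -
  let ?A = "{1..m} \<times> {1..d}"
  let ?E = "PiE_dflt ?A False (\<lambda>_. UNIV :: bool set)"
  define cur :: "(nat \<times> nat \<Rightarrow> bool) \<Rightarrow> nat \<Rightarrow> nat \<Rightarrow> bool" where "cur f = (\<lambda>i l. f (i, l))" for f
  define \<psi> :: "(nat \<times> nat \<Rightarrow> bool) \<Rightarrow> nat \<times> nat \<Rightarrow> bool"
    where "\<psi> f = (\<lambda>(i, l). if l \<in> R then f (i, l) \<noteq> f (i, j) else f (i, l))" for f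
  have input: "input_pmf m d = map_pmf cur (pmf_of_set ?E)"
    unfolding input_pmf_def cur_def by (subst Pi_pmf_of_set) auto
  have "map_pmf \<psi> (pmf_of_set ?E) = pmf_of_set ?E"
  proof (rule map_pmf_of_set_involution)
    show "finite ?E" by (intro finite_PiE_dflt) auto
    show "?E \<noteq> {}" by (simp add: PiE_dflt_empty_iff)
    show "\<psi> f \<in> ?E" if "f \<in> ?E" for f
      using that assms(1) unfolding \<psi>_def PiE_dflt_def by auto
    show "\<psi> (\<psi> f) = f" for f
      using assms(2) unfolding \<psi>_def by (auto simp: fun_eq_iff)
  qed
  moreover have "xor_columns R j \<circ> cur = cur \<circ> \<psi>"
    unfolding xor_columns_def cur_def \<psi>_def by (auto simp: fun_eq_iff)
  ultimately show ?thesis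
    unfolding input by (metis pmf.map_comp)
qed

lemma column_corr_xor_columns:
  assumes "j \<notin> R"
  shows "column_corr m R j X = (\<Sum>i=1..m. \<Sum>l\<in>R. spin (xor_columns R j X i l))"
  unfolding column_corr_def xor_columns_def using assms
  by (intro sum.cong refl) (auto simp: spin_xor[symmetric] intro: arg_cong[where f = spin])

lemma prob_column_corr_ge:
  assumes "R \<subseteq> {1..d}" "j \<notin> R" "\<epsilon> > 0" "real m * real (card R) \<le> K" "K > 0"
  shows "measure_pmf.prob (input_pmf m d) {X. \<bar>column_corr m R j X\<bar> \<ge> \<epsilon>}
     \<le> 2 * exp (- \<epsilon>\<^sup>2 / (2 * K))"
proof -
  let ?J = "{1..m} \<times> R"
  let ?sum = "\<lambda>X. \<Sum>i=1..m. \<Sum>l\<in>R. spin (X i l)"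
  have fin: "finite R" using assms(1) finite_subset by blast
  have "measure_pmf.prob (input_pmf m d) {X. \<bar>column_corr m R j X\<bar> \<ge> \<epsilon>}
      = measure_pmf.prob (map_pmf (xor_columns R j) (input_pmf m d)) {X. \<bar>?sum X\<bar> \<ge> \<epsilon>}"
    by (simp add: column_corr_xor_columns[OF assms(2)] vimage_def)
  also have "\<dots> = measure_pmf.prob (input_pmf m d) {X. \<bar>?sum X\<bar> \<ge> \<epsilon>}"
    unfolding map_pmf_xor_columns_input_pmf[OF assms(1,2)] ..
  also have "\<dots> = measure_pmf.prob (Pi_pmf ({1..m} \<times> {1..d}) False (\<lambda>_. pmf_of_set UNIV))
     {f. \<bar>(\<Sum>a\<in>?J. spin (f a)) - (\<Sum>a\<in>?J. measure_pmf.expectation (pmf_of_set UNIV) spin)\<bar> \<ge> \<epsilon>}"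
    unfolding input_pmf_def measure_map_pmf vimage_def expectation_spin_uniform
    by (simp add: sum.cartesian_product case_prod_unfold)
  also have "\<dots> \<le> 2 * exp (- \<epsilon>\<^sup>2 / (2 * K))"
    using assms fin by (intro Pi_pmf_Hoeffding_abs) (auto simp: card_cartesian_product)
  finally show ?thesis .
qed

lemma top_k_sets_unique:
  assumes S: "S \<subseteq> {1..d}" "card S = k"
    and sep: "\<And>l j. l \<in> S \<Longrightarrow> j \<in> {1..d} - S \<Longrightarrow> sc j < sc l"
    and T: "T \<in> top_k_sets d k sc"
  shows "T = S"
proof (rule ccontr)
  assume "T \<noteq> S"
  have T_sub: "T \<subseteq> {1..d}" and "card T = k"
    and top: "\<forall>j\<in>T. \<forall>l\<in>{1..d} - T. sc l \<le> sc j"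
    using T unfolding top_k_sets_def by auto
  have fin: "finite S" "finite T" using S(1) T_sub finite_subset by blast+
  have "\<not> S \<subseteq> T" using card_subset_eq[OF fin(2)] \<open>T \<noteq> S\<close> \<open>card T = k\<close> S(2) by metis
  moreover have "\<not> T \<subseteq> S" using card_subset_eq[OF fin(1)] \<open>T \<noteq> S\<close> \<open>card T = k\<close> S(2) by metis
  ultimately obtain l j where "l \<in> S - T" "j \<in> T - S" by blast
  then have "sc l \<le> sc j" and "sc j < sc l"
    using top sep S(1) T_sub by auto
  then show False by simp
qed

lemma top_k_sets_trivial:
  assumes "S \<subseteq> {1..d}" "card S = k" "k = 0 \<or> k = d" "T \<in> top_k_sets d k sc"
  shows "T = S"
proof -
  have T: "T \<subseteq> {1..d}" "card T = k" using assms(4) unfolding top_k_sets_def by auto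
  have fin: "finite S" "finite T" using assms(1) T(1) finite_subset by blast+
  show ?thesis
  proof (cases "k = 0")
    case True
    then show ?thesis using fin T(2) assms(2) by simp
  next
    case False
    with assms(3) have "k = d" by simp
    then have "T = {1..d}" "S = {1..d}"
      using assms(1,2) T by (simp_all add: card_subset_eq)
    then show ?thesis by simp
  qed
qed

lemma score_separation:
  fixes sc :: "nat \<Rightarrow> real"
  assumes "\<gamma> > 0" "finite S" "l \<in> S" "j \<notin> S" and J: "j \<in> J" "l \<in> J"
    and dev: "\<And>i. i \<in> J \<Longrightarrow> \<bar>real m * sc i - \<gamma> * column_corr m S i X\<bar> < real m * \<gamma> / 4"
    and cross: "\<And>i. i \<in> J \<Longrightarrow> \<bar>column_corr m (S - {i}) i X\<bar> < real m / 4"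
  shows "sc j < sc l"
proof -
  have cross_scaled: "\<bar>\<gamma> * column_corr m (S - {i}) i X\<bar> < real m * \<gamma> / 4" if "i \<in> J" for i
  proof -
    have "\<bar>\<gamma> * column_corr m (S - {i}) i X\<bar> = \<gamma> * \<bar>column_corr m (S - {i}) i X\<bar>"
      using assms(1) by (simp add: abs_mult)
    also have "\<dots> < \<gamma> * (real m / 4)"
      by (intro mult_strict_left_mono cross[OF that] assms(1))
    finally show ?thesis by (simp add: mult.commute)
  qed
  have "column_corr m S l X = real m + column_corr m (S - {l}) l X"
    using column_corr_remove[OF assms(2), of m l X] assms(3) by simp
  then have "\<gamma> * column_corr m S l X = real m * \<gamma> + \<gamma> * column_corr m (S - {l}) l X"
    by (simp add: distrib_left mult.commute)
  then have "real m * sc l > real m * \<gamma> / 2"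
    using dev[OF J(2)] cross_scaled[OF J(2)] unfolding abs_less_iff by linarith
  moreover have "\<gamma> * column_corr m S j X = \<gamma> * column_corr m (S - {j}) j X"
    using column_corr_remove[OF assms(2), of m j X] assms(4) by simp
  then have "real m * sc j < real m * \<gamma> / 2"
    using dev[OF J(1)] cross_scaled[OF J(1)] unfolding abs_less_iff by linarith
  ultimately have "real m * sc j < real m * sc l" by linarith
  moreover have "real m * \<gamma> > 0"
    using dev[OF J(1)] by linarith
  then have "real m > 0"
    using assms(1) by (simp add: zero_less_mult_iff)
  ultimately show ?thesis by simp
qed

lemma prob_recovery_failure:
  assumes \<eta>: "0 \<le> \<eta>" "\<eta> < 1/2" and "m > 0" "k > 0" and S: "S \<subseteq> {1..d}" "card S = k"
    and bij: "\<And>X i. i \<in> {1..m} \<Longrightarrow> bij_betw (P X i) {1..k} S"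
  shows "measure_pmf.prob (pair_pmf (input_pmf m d) (noise_pmf m k \<eta>))
      {(X, N). \<not> recovery_success d k m S P X N}
    \<le> 4 * real d * exp (- real m * (1 - 2 * \<eta>)\<^sup>2 / (32 * real k))"
proof -
  define \<gamma> where "\<gamma> = 1 - 2 * \<eta>"
  define B where "B = 2 * exp (- real m * \<gamma>\<^sup>2 / (32 * real k))"
  let ?M = "pair_pmf (input_pmf m d) (noise_pmf m k \<eta>)"
  let ?sc = "\<lambda>X N. score m k X (\<lambda>i. chain (X i) (P X i) (N i))"
  define cross_large where
    "cross_large j = {(X, N::nat \<Rightarrow> nat \<Rightarrow> bool). \<bar>column_corr m (S - {j}) j X\<bar> \<ge> real m / 4}" for j
  define score_dev where
    "score_dev j = {(X, N). \<bar>real m * ?sc X N j - \<gamma> * column_corr m S j X\<bar> \<ge> real m * \<gamma> / 4}" for j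
  have \<gamma>: "0 < \<gamma>" "\<gamma> \<le> 1" using \<eta> by (auto simp: \<gamma>_def)
  have fin: "finite S" using S(1) finite_subset by blast
  have cross: "measure_pmf.prob ?M (cross_large j) \<le> B" for j
  proof -
    have "measure_pmf.prob ?M (cross_large j)
        = measure_pmf.prob (input_pmf m d) {X. \<bar>column_corr m (S - {j}) j X\<bar> \<ge> real m / 4}"
      unfolding cross_large_def by (rule measure_pair_pmf_fst)
    also have "\<dots> \<le> 2 * exp (- (real m / 4)\<^sup>2 / (2 * (real m * real k)))"
      using S assms(3,4) card_Diff1_le[of S j] by (intro prob_column_corr_ge) auto
    also have "\<dots> \<le> B"
    proof -
      have "real m * \<gamma>\<^sup>2 \<le> real m"
        using \<gamma> by (intro mult_left_le power_le_one) auto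
      then have "real m * \<gamma>\<^sup>2 / (32 * real k) \<le> (real m / 4)\<^sup>2 / (2 * (real m * real k))"
        using assms(3,4) by (simp add: field_simps power2_eq_square)
      then show ?thesis unfolding B_def by simp
    qed
    finally show ?thesis .
  qed
  have dev: "measure_pmf.prob ?M (score_dev j) \<le> B" for j
    unfolding score_dev_def B_def \<gamma>_def
    by (rule measure_pair_pmf_le_sections) (use prob_score_deviation[OF assms(1-4) bij] in simp)
  have "recovery_success d k m S P X N"
    if good: "(X, N) \<notin> (\<Union>j\<in>{1..d}. cross_large j \<union> score_dev j)" for X N
  proof -
    have "?sc X N j < ?sc X N l" if "l \<in> S" "j \<in> {1..d} - S" for l j
      using good that S(1)
      by (intro score_separation[where J = "{1..d}" and S = S and \<gamma> = \<gamma>] \<gamma>(1) fin)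
        (auto simp: cross_large_def score_dev_def not_le)
    then show ?thesis
      unfolding recovery_success_def using top_k_sets_unique[OF S] by blast
  qed
  then have "{(X, N). \<not> recovery_success d k m S P X N} \<subseteq> (\<Union>j\<in>{1..d}. cross_large j \<union> score_dev j)"
    by blast
  then have "measure_pmf.prob ?M {(X, N). \<not> recovery_success d k m S P X N}
      \<le> measure_pmf.prob ?M (\<Union>j\<in>{1..d}. cross_large j \<union> score_dev j)"
    by (rule measure_pmf.finite_measure_mono) simp
  also have "\<dots> \<le> (\<Sum>j\<in>{1..d}. measure_pmf.prob ?M (cross_large j \<union> score_dev j))"
    by (rule measure_pmf.finite_measure_subadditive_finite) auto
  also have "\<dots> \<le> (\<Sum>j\<in>{1..d}. B + B)"
    by (intro sum_mono order_trans[OF measure_Un_le] add_mono cross dev) auto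
  also have "\<dots> = 4 * real d * exp (- real m * (1 - 2 * \<eta>)\<^sup>2 / (32 * real k))"
    by (simp add: B_def \<gamma>_def)
  finally show ?thesis .
qed

lemma exp_tail_le_of_sample_size:
  fixes d k m \<delta> \<gamma> :: real
  assumes "d \<ge> 2" "k > 0" "0 < \<delta>" "\<delta> < 1" "\<gamma> \<noteq> 0"
    and m: "m \<ge> 96 * (k / \<gamma>\<^sup>2) * ln (d / \<delta>)"
  shows "4 * d * exp (- m * \<gamma>\<^sup>2 / (32 * k)) \<le> \<delta>"
proof -
  define L where "L = ln (d / \<delta>)"
  have "\<gamma>\<^sup>2 > 0" using assms(5) by simp
  then have "m * \<gamma>\<^sup>2 \<ge> 96 * k * L"
    using m unfolding L_def by (simp add: field_simps)
  then have "- m * \<gamma>\<^sup>2 / (32 * k) \<le> 3 * (- L)"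
    using assms(2) by (simp add: field_simps)
  then have "exp (- m * \<gamma>\<^sup>2 / (32 * k)) \<le> exp (- L) ^ 3"
    by (simp flip: exp_of_nat_mult)
  also have "exp (- L) = \<delta> / d"
    using assms(1,3) by (simp add: L_def exp_minus)
  finally have "4 * d * exp (- m * \<gamma>\<^sup>2 / (32 * k)) \<le> \<delta> * (4 * \<delta>\<^sup>2 / d\<^sup>2)"
    using assms(1) by (simp add: field_simps power2_eq_square power3_eq_cube)
  also have "\<delta> * (4 * \<delta>\<^sup>2 / d\<^sup>2) \<le> \<delta>"
  proof (rule mult_left_le)
    have "4 * \<delta>\<^sup>2 \<le> d\<^sup>2"
      using assms(1,3,4) power_mono[of 2 d 2] power_mono[of \<delta> 1 2] by simp
    then show "4 * \<delta>\<^sup>2 / d\<^sup>2 \<le> 1"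
      using assms(1) by simp
  qed (use assms(3) in simp)
  finally show ?thesis .
qed

theorem theorem11p1:
  "\<exists>C::real. C > 0 \<and>
    (\<forall>(d::nat) (k::nat) (S::nat set) (\<eta>::real) (m::nat) (\<delta>::real)
       (P :: (nat \<Rightarrow> nat \<Rightarrow> bool) \<Rightarrow> nat \<Rightarrow> nat \<Rightarrow> nat).
       k \<le> d \<longrightarrow> S \<subseteq> {1..d} \<longrightarrow> card S = k \<longrightarrow>
       0 \<le> \<eta> \<longrightarrow> \<eta> < 1/2 \<longrightarrow>
       (\<forall>X i. i \<in> {1..m} \<longrightarrow> bij_betw (P X i) {1..k} S) \<longrightarrow>
       0 < \<delta> \<longrightarrow> \<delta> < 1 \<longrightarrow>
       real m \<ge> C * (real k / (1 - 2 * \<eta>)^2) * ln (real d / \<delta>) \<longrightarrow>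
       measure_pmf.prob (pair_pmf (input_pmf m d) (noise_pmf m k \<eta>))
         {(X, N). recovery_success d k m S P X N} \<ge> 1 - \<delta>)"
proof (rule exI[of _ 96], intro conjI allI impI)
  show "(0::real) < 96" by simp
  fix d k :: nat and S :: "nat set" and \<eta> :: real and m :: nat and \<delta> :: real
    and P :: "(nat \<Rightarrow> nat \<Rightarrow> bool) \<Rightarrow> nat \<Rightarrow> nat \<Rightarrow> nat"
  assume "k \<le> d" and S: "S \<subseteq> {1..d}" "card S = k" and \<eta>: "0 \<le> \<eta>" "\<eta> < 1/2"
    and bij: "\<forall>X i. i \<in> {1..m} \<longrightarrow> bij_betw (P X i) {1..k} S"
    and \<delta>: "0 < \<delta>" "\<delta> < 1"
    and m: "real m \<ge> 96 * (real k / (1 - 2 * \<eta>)^2) * ln (real d / \<delta>)"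
  let ?M = "pair_pmf (input_pmf m d) (noise_pmf m k \<eta>)"
  let ?success = "{(X, N). recovery_success d k m S P X N}"
  show "measure_pmf.prob ?M ?success \<ge> 1 - \<delta>"
  proof (cases "k = 0 \<or> k = d")
    case True
    then have "?success = UNIV"
      using top_k_sets_trivial[OF S] by (auto simp: recovery_success_def)
    then show ?thesis using \<delta> by simp
  next
    case False
    then have k: "k > 0" and d: "real d \<ge> 2" using \<open>k \<le> d\<close> by auto
    have "0 < 96 * (real k / (1 - 2 * \<eta>)^2) * ln (real d / \<delta>)"
      using k d \<delta> \<eta> by (simp add: ln_gt_zero_iff field_simps)
    then have "m > 0" using m by linarith
    have "measure_pmf.prob ?M (UNIV - ?success)
        \<le> 4 * real d * exp (- real m * (1 - 2 * \<eta>)\<^sup>2 / (32 * real k))"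
      using prob_recovery_failure[OF \<eta> \<open>m > 0\<close> k S] bij by (simp add: set_diff_eq case_prod_unfold)
    also have "\<dots> \<le> \<delta>"
      using d k \<delta> \<eta> m by (intro exp_tail_le_of_sample_size) auto
    finally show ?thesis
      using measure_pmf.prob_compl[of ?success ?M] by simp
  qed
qed

end
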